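(* Consider the following game over slots $1,\dots,T$ with $N\ge2$ users and an integer $1\le k<N$. The BS chooses a probability distribution on $k$-element subsets of the users. In every slot it independently schedules a random $k$-subset drawn from this distribution. The adversary chooses a blocking matrix $\sigma\in\{0,1\}^{N\times T}$, where $\sigma_i(t)=0$ means user $i$ is blocked in slot $t$. Feasibility means $\sum_{i,t}(1-\sigma_i(t))\le\alpha T$ and $\sum_i(1-\sigma_i(t))\le k_a$ for each $t$, where $k_a\ge1$ and $0<\alpha<1$. Ages satisfy $a_i(1)=1$, $a_i(t+1)=1$ if user $i$ is scheduled and not blocked in slot $t$, and $a_i(t+1)=a_i(t)+1$ otherwise. The payoff is the average age $\frac1T\sum_{t=1}^T\frac1N\sum_i\mathbb E[a_i(t)]$; the BS minimizes it and the adversary maximizes it. Then, for all sufficiently large $T$ with $\alpha T\in\mathbb Z$, this game has no Nash equilibrium. Here the BS's strategies are the distributions on $k$-subsets, and the adversary's strategies are the feasible blocking matrices. *)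

theory Defs
  imports "HOL-Probability.Probability"
begin

(* Users are indexed 0..<N, slots 1..T.
   sigma i t = True  means  sigma_i(t) = 1 (user i NOT blocked in slot t). *)

definition bs_strategy :: "nat \<Rightarrow> nat \<Rightarrow> nat set pmf \<Rightarrow> bool" where
  "bs_strategy N k p \<longleftrightarrow> set_pmf p \<subseteq> {S. S \<subseteq> {..<N} \<and> card S = k}"

definition feasible :: "nat \<Rightarrow> nat \<Rightarrow> real \<Rightarrow> nat \<Rightarrow> (nat \<Rightarrow> nat \<Rightarrow> bool) \<Rightarrow> bool" where
  "feasible N T \<alpha> ka \<sigma> \<longleftrightarrow>
     (\<Sum>i<N. \<Sum>t=1..T. 1 - real (of_bool (\<sigma> i t))) \<le> \<alpha> * real T \<and>
     (\<forall>t\<in>{1..T}. (\<Sum>i<N. 1 - real (of_bool (\<sigma> i t))) \<le> real ka)"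

definition sched_pmf :: "nat set pmf \<Rightarrow> nat \<Rightarrow> (nat \<Rightarrow> nat set) pmf" where
  "sched_pmf p T = Pi_pmf {1..T} {} (\<lambda>_. p)"

(* age a_i(t) for t \<ge> 1; the value at t = 0 is unused *)
fun age :: "(nat \<Rightarrow> nat set) \<Rightarrow> (nat \<Rightarrow> nat \<Rightarrow> bool) \<Rightarrow> nat \<Rightarrow> nat \<Rightarrow> nat" where
  "age s \<sigma> i 0 = 1"
| "age s \<sigma> i (Suc 0) = 1"
| "age s \<sigma> i (Suc (Suc t)) =
     (if i \<in> s (Suc t) \<and> \<sigma> i (Suc t) then 1 else age s \<sigma> i (Suc t) + 1)"

definition payoff :: "nat \<Rightarrow> nat \<Rightarrow> nat set pmf \<Rightarrow> (nat \<Rightarrow> nat \<Rightarrow> bool) \<Rightarrow> real" where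
  "payoff N T p \<sigma> =
     (1 / real T) * (\<Sum>t=1..T. (1 / real N) *
        (\<Sum>i<N. measure_pmf.expectation (sched_pmf p T) (\<lambda>s. real (age s \<sigma> i t))))"

definition nash_eq :: "nat \<Rightarrow> nat \<Rightarrow> nat \<Rightarrow> real \<Rightarrow> nat \<Rightarrow> nat set pmf \<Rightarrow> (nat \<Rightarrow> nat \<Rightarrow> bool) \<Rightarrow> bool" where
  "nash_eq N k T \<alpha> ka p \<sigma> \<longleftrightarrow>
     bs_strategy N k p \<and> feasible N T \<alpha> ka \<sigma> \<and>
     (\<forall>p'. bs_strategy N k p' \<longrightarrow> payoff N T p \<sigma> \<le> payoff N T p' \<sigma>) \<and>
     (\<forall>\<sigma>'. feasible N T \<alpha> ka \<sigma>' \<longrightarrow> payoff N T p \<sigma>' \<le> payoff N T p \<sigma>)"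

end

theory Submission
  imports Defs
begin

(* Expected ages depend on the strategy of the base station only through the probabilities q_i
   with which the users are scheduled, and the total age of a user is convex in q_i, strictly so as
   soon as it is unblocked in two slots. At an equilibrium, comparing with the uniform strategy and
   with the cyclic relabellings of the blocking matrix therefore forces q_i = k / N for all i.
   Against uniform q_i the excess age caused by blocking grows quadratically in the length of a
   run of blocked slots, so the adversary must spend its whole budget of alpha T blocks on one user
   in a single long run. But then the base station gains by moving scheduling probability delta
   from an unblocked user to the blocked one: the gain is of order alpha T delta, while the loss
   from convexity is of order T delta^2. *)

section \<open>Expected ages\<close>

definition incl_prob :: "nat set pmf \<Rightarrow> nat \<Rightarrow> real" where
  "incl_prob p i = measure_pmf.prob p {S. i \<in> S}"

(* exp_age x \<rho> t is the expected age at slot t of a user that is scheduled with probability x in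
   every slot and unblocked exactly in the slots where \<rho> holds: a(t) - 1 counts the a < t such
   that the user was not served in any of the slots a, ..., t - 1. *)
definition exp_age :: "real \<Rightarrow> (nat \<Rightarrow> bool) \<Rightarrow> nat \<Rightarrow> real" where
  "exp_age x \<rho> t = 1 + (\<Sum>a\<in>{1..<t}. \<Prod>s\<in>{a..<t}. if \<rho> s then 1 - x else 1)"

definition total_age :: "real \<Rightarrow> (nat \<Rightarrow> bool) \<Rightarrow> nat \<Rightarrow> real" where
  "total_age x \<rho> T = (\<Sum>t=1..T. exp_age x \<rho> t)"

lemma sum_suffix_prod_Suc:
  fixes h :: "nat \<Rightarrow> 'a::comm_ring_1"
  assumes "1 \<le> t"
  shows "(\<Sum>a\<in>{1..<Suc t}. \<Prod>s\<in>{a..<Suc t}. h s) = h t * (1 + (\<Sum>a\<in>{1..<t}. \<Prod>s\<in>{a..<t}. h s))"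
proof -
  have "{1..<Suc t} = insert t {1..<t}" "\<And>a. a < t \<Longrightarrow> {a..<Suc t} = insert t {a..<t}"
    using assms by auto
  then show ?thesis
    by (simp add: sum_distrib_left algebra_simps)
qed

lemma age_eq_sum_prod:
  "real (age s \<sigma> i t) = 1 + (\<Sum>a\<in>{1..<t}. \<Prod>x\<in>{a..<t}. if i \<in> s x \<and> \<sigma> i x then 0 else 1)"
proof (induction s \<sigma> i t rule: age.induct)
  case (3 s \<sigma> i t)
  then show ?case
    by (subst sum_suffix_prod_Suc) auto
qed auto

lemma exp_age_Suc:
  "1 \<le> t \<Longrightarrow> exp_age x \<rho> (Suc t) = 1 + (if \<rho> t then 1 - x else 1) * exp_age x \<rho> t"
  unfolding exp_age_def by (subst sum_suffix_prod_Suc) auto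

lemma exp_age_1 [simp]: "exp_age x \<rho> (Suc 0) = 1"
  by (simp add: exp_age_def)

lemma expectation_not_served:
  "measure_pmf.expectation p (\<lambda>S. if i \<in> S \<and> b then 0 else 1 :: real) = (if b then 1 - incl_prob p i else 1)"
proof -
  have "(\<lambda>S. if i \<in> S \<and> b then 0 else 1 :: real) = (\<lambda>S. 1 - of_bool b * indicator {S. i \<in> S} S)"
    by (auto simp: indicator_def)
  then show ?thesis
    by (simp add: incl_prob_def measure_pmf.integrable_const_bound[where B=1])
qed

lemma expectation_prod_not_served:
  assumes "{a..<t} \<subseteq> {1..T}"
  shows "measure_pmf.expectation (sched_pmf p T) (\<lambda>s. \<Prod>x\<in>{a..<t}. if i \<in> s x \<and> \<sigma> i x then 0 else 1 :: real)
     = (\<Prod>x\<in>{a..<t}. if \<sigma> i x then 1 - incl_prob p i else 1)"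
proof -
  define f where "f x = (\<lambda>S. if i \<in> S \<and> (x \<in> {a..<t} \<and> \<sigma> i x) then 0 else 1 :: real)" for x
  have "measure_pmf.expectation (sched_pmf p T) (\<lambda>s. \<Prod>x\<in>{1..T}. f x (s x))
      = (\<Prod>x\<in>{1..T}. measure_pmf.expectation p (f x))"
    unfolding sched_pmf_def
    by (rule expectation_prod_Pi_pmf) (auto simp: f_def intro!: measure_pmf.integrable_const_bound[where B=1])
  moreover have "(\<Prod>x\<in>{1..T}. f x (s x)) = (\<Prod>x\<in>{a..<t}. if i \<in> s x \<and> \<sigma> i x then 0 else 1)" for s
    using assms by (intro prod.mono_neutral_cong_right) (auto simp: f_def)
  moreover have "(\<Prod>x\<in>{1..T}. measure_pmf.expectation p (f x))
      = (\<Prod>x\<in>{a..<t}. if \<sigma> i x then 1 - incl_prob p i else 1)"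
    using assms by (intro prod.mono_neutral_cong_right) (auto simp: f_def expectation_not_served)
  ultimately show ?thesis
    by simp
qed

lemma expectation_age:
  assumes "t \<le> Suc T"
  shows "measure_pmf.expectation (sched_pmf p T) (\<lambda>s. real (age s \<sigma> i t)) = exp_age (incl_prob p i) (\<sigma> i) t"
proof -
  let ?P = "\<lambda>a s. \<Prod>x\<in>{a..<t}. if i \<in> s x \<and> \<sigma> i x then 0 else 1 :: real"
  have "0 \<le> ?P a s \<and> ?P a s \<le> 1" for a s
    by (auto intro!: prod_nonneg prod_le_1)
  then have int: "integrable (measure_pmf (sched_pmf p T)) (?P a)" for a
    by (intro measure_pmf.integrable_const_bound[where B=1]) auto
  have "measure_pmf.expectation (sched_pmf p T) (\<lambda>s. real (age s \<sigma> i t))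
      = 1 + (\<Sum>a\<in>{1..<t}. measure_pmf.expectation (sched_pmf p T) (?P a))"
    by (simp add: age_eq_sum_prod int Bochner_Integration.integral_sum)
  also have "\<dots> = exp_age (incl_prob p i) (\<sigma> i) t"
    unfolding exp_age_def using assms
    by (intro arg_cong2[where f="(+)"] refl sum.cong expectation_prod_not_served) auto
  finally show ?thesis .
qed

lemma payoff_eq_total_age:
  "payoff N T p \<sigma> = (\<Sum>i<N. total_age (incl_prob p i) (\<sigma> i) T) / (real N * real T)"
proof -
  have "payoff N T p \<sigma> = (\<Sum>t=1..T. \<Sum>i<N. exp_age (incl_prob p i) (\<sigma> i) t) / (real N * real T)"
    unfolding payoff_def by (simp add: expectation_age sum_divide_distrib)
  then show ?thesis
    unfolding total_age_def by (metis (no_types) sum.swap)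
qed

lemma payoff_le_payoff_iff:
  assumes "0 < N" "0 < T"
  shows "payoff N T p \<sigma> \<le> payoff N T p' \<sigma>' \<longleftrightarrow>
    (\<Sum>i<N. total_age (incl_prob p i) (\<sigma> i) T) \<le> (\<Sum>i<N. total_age (incl_prob p' i) (\<sigma>' i) T)"
proof -
  have "0 < real N * real T"
    using assms by simp
  then show ?thesis
    by (simp add: payoff_eq_total_age divide_le_cancel)
qed

section \<open>Strategies of the base station\<close>

lemma sum_incl_prob:
  assumes "bs_strategy N k p"
  shows "(\<Sum>i<N. incl_prob p i) = real k"
proof -
  have int: "integrable (measure_pmf p) (indicator {S. i \<in> S} :: nat set \<Rightarrow> real)" for i
    by (rule measure_pmf.integrable_const_bound[where B=1]) auto
  have "(\<Sum>i<N. indicator {S. i \<in> S} S) = real k" if "S \<in> set_pmf p" for S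
  proof -
    have "S \<subseteq> {..<N}" "card S = k"
      using assms that by (auto simp: bs_strategy_def)
    moreover have "(\<Sum>i<N. indicator {S. i \<in> S} S :: real) = real (card ({..<N} \<inter> S))"
      by (simp add: indicator_def sum.If_cases)
    ultimately show ?thesis
      by (simp add: Int_absorb1)
  qed
  then have "measure_pmf.expectation p (\<lambda>S. \<Sum>i<N. indicator {S. i \<in> S} S) = real k"
    by (subst integral_cong_AE[where g="\<lambda>_. real k"]) (auto intro: AE_pmfI)
  then show ?thesis
    by (simp add: incl_prob_def Bochner_Integration.integral_sum[OF int])
qed

lemma card_subsets_containing:
  assumes "finite A" "l \<in> A" "1 \<le> k"
  shows "card {S. S \<subseteq> A \<and> card S = k \<and> l \<in> S} = (card A - 1) choose (k - 1)"
proof -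
  have "{S. S \<subseteq> A \<and> card S = k \<and> l \<in> S} = insert l ` {S. S \<subseteq> A - {l} \<and> card S = k - 1}"
  proof (intro subset_antisym subsetI)
    fix S assume S: "S \<in> {S. S \<subseteq> A \<and> card S = k \<and> l \<in> S}"
    then have "finite S"
      using assms(1) finite_subset by blast
    with S show "S \<in> insert l ` {S. S \<subseteq> A - {l} \<and> card S = k - 1}"
      by (intro image_eqI[of _ _ "S - {l}"]) auto
  next
    fix S assume "S \<in> insert l ` {S. S \<subseteq> A - {l} \<and> card S = k - 1}"
    then obtain S' where "S = insert l S'" "S' \<subseteq> A - {l}" "card S' = k - 1"
      by blast
    moreover have "finite S'" "l \<notin> S'"
      using \<open>S' \<subseteq> A - {l}\<close> assms(1) finite_subset by blast+
    ultimately show "S \<in> {S. S \<subseteq> A \<and> card S = k \<and> l \<in> S}"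
      using assms by auto
  qed
  moreover have "inj_on (insert l) {S. S \<subseteq> A - {l} \<and> card S = k - 1}"
    by (rule inj_onI) (metis Diff_insert_absorb mem_Collect_eq subset_Diff_insert)
  ultimately show ?thesis
    using assms by (simp add: card_image n_subsets)
qed

lemma card_subsets_containing_avoiding:
  assumes "finite A" "l \<in> A" "j \<in> A" "l \<noteq> j" "1 \<le> k"
  shows "card {S. S \<subseteq> A \<and> card S = k \<and> l \<in> S \<and> j \<notin> S} = (card A - 2) choose (k - 1)"
proof -
  have "{S. S \<subseteq> A \<and> card S = k \<and> l \<in> S \<and> j \<notin> S} = {S. S \<subseteq> A - {j} \<and> card S = k \<and> l \<in> S}"
    by auto
  then show ?thesis
    using assms card_subsets_containing[of "A - {j}" l k]
    by (simp add: card_Diff_singleton diff_diff_left numeral_2_eq_2)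
qed

definition uniform_subsets :: "nat \<Rightarrow> nat \<Rightarrow> nat set pmf" where
  "uniform_subsets N k = pmf_of_set {S. S \<subseteq> {..<N} \<and> card S = k}"

lemma finite_subsets_card: "finite {S. S \<subseteq> {..<N::nat} \<and> card S = k}"
  by (rule finite_subset[of _ "Pow {..<N}"]) auto

lemma subsets_card_nonempty:
  assumes "k \<le> N"
  shows "{S. S \<subseteq> {..<N::nat} \<and> card S = k} \<noteq> {}"
proof -
  have "card {S. S \<subseteq> {..<N} \<and> card S = k} = N choose k"
    by (simp add: n_subsets)
  moreover have "N choose k \<noteq> 0"
    using assms by simp
  ultimately show ?thesis
    by (metis card.empty)
qed

lemma set_uniform_subsets:
  "k \<le> N \<Longrightarrow> set_pmf (uniform_subsets N k) = {S. S \<subseteq> {..<N} \<and> card S = k}"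
  unfolding uniform_subsets_def by (intro set_pmf_of_set subsets_card_nonempty finite_subsets_card)

lemma bs_strategy_uniform_subsets: "k \<le> N \<Longrightarrow> bs_strategy N k (uniform_subsets N k)"
  by (simp add: bs_strategy_def set_uniform_subsets)

lemma prob_uniform_subsets:
  assumes "k \<le> N"
  shows "measure_pmf.prob (uniform_subsets N k) {S. P S}
    = card {S. S \<subseteq> {..<N} \<and> card S = k \<and> P S} / (N choose k)"
proof -
  have "{S. S \<subseteq> {..<N} \<and> card S = k} \<inter> {S. P S} = {S. S \<subseteq> {..<N} \<and> card S = k \<and> P S}"
    by auto
  then show ?thesis
    using assms
    unfolding uniform_subsets_def
    by (simp add: measure_pmf_of_set[OF subsets_card_nonempty finite_subsets_card] n_subsets Int_commute)
qed

lemma incl_prob_uniform_subsets: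
  assumes "1 \<le> k" "k \<le> N" "i < N"
  shows "incl_prob (uniform_subsets N k) i = real k / real N"
proof -
  have "incl_prob (uniform_subsets N k) i = real ((N - 1) choose (k - 1)) / real (N choose k)"
    using assms card_subsets_containing[of "{..<N}" i k] by (simp add: incl_prob_def prob_uniform_subsets)
  moreover have "k * (N choose k) = N * ((N - 1) choose (k - 1))"
    using assms by (simp add: times_binomial_minus1_eq)
  then have "real k * real (N choose k) = real N * real ((N - 1) choose (k - 1))"
    by (metis of_nat_mult)
  moreover have "N choose k \<noteq> 0" "N \<noteq> 0"
    using assms by simp_all
  ultimately show ?thesis
    by (simp add: frac_eq_eq mult.commute)
qed

lemma prob_uniform_subsets_containing_avoiding:
  assumes "1 \<le> k" "k \<le> N" "l < N" "j < N" "l \<noteq> j"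
  shows "measure_pmf.prob (uniform_subsets N k) {S. l \<in> S \<and> j \<notin> S}
    = real ((N - 2) choose (k - 1)) / real (N choose k)"
  using assms card_subsets_containing_avoiding[of "{..<N}" l j k]
  by (simp add: prob_uniform_subsets)

definition move_member :: "nat \<Rightarrow> nat \<Rightarrow> nat set \<Rightarrow> nat set" where
  "move_member l j S = (if l \<in> S \<and> j \<notin> S then insert j (S - {l}) else S)"

lemma move_member_subset_card:
  assumes "S \<subseteq> {..<N}" "card S = k" "j < N"
  shows "move_member l j S \<subseteq> {..<N} \<and> card (move_member l j S) = k"
proof (cases "l \<in> S \<and> j \<notin> S")
  case True
  have "finite S"
    using assms(1) finite_subset by blast
  with True have "card S > 0"
    using card_gt_0_iff by blast
  with True \<open>finite S\<close> show ?thesis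
    using assms by (auto simp: move_member_def card_insert_if)
qed (use assms in \<open>auto simp: move_member_def\<close>)

lemma prob_uniform_subsets_move_member:
  assumes "1 \<le> k" "k \<le> N" "l < N" "j < N" "l \<noteq> j" "i < N"
  shows "measure_pmf.prob (uniform_subsets N k) {S. i \<in> move_member l j S}
    = real k / real N + (if i = j then 1 else if i = l then -1 else 0)
        * (real ((N - 2) choose (k - 1)) / real (N choose k))"
proof -
  let ?U = "uniform_subsets N k"
  let ?moved = "{S. l \<in> S \<and> j \<notin> S}"
  have moved: "measure_pmf.prob ?U ?moved = real ((N - 2) choose (k - 1)) / real (N choose k)"
    using assms by (intro prob_uniform_subsets_containing_avoiding)
  have incl: "measure_pmf.prob ?U {S. i' \<in> S} = real k / real N" if "i' < N" for i'
    using incl_prob_uniform_subsets[OF assms(1,2) that] by (simp add: incl_prob_def)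
  consider "i = j" | "i = l" | "i \<noteq> j" "i \<noteq> l"
    by blast
  then show ?thesis
  proof cases
    case 1
    then have "{S. i \<in> move_member l j S} = {S. j \<in> S} \<union> ?moved"
      by (auto simp: move_member_def)
    moreover have "measure_pmf.prob ?U ({S. j \<in> S} \<union> ?moved)
        = measure_pmf.prob ?U {S. j \<in> S} + measure_pmf.prob ?U ?moved"
      by (rule measure_pmf.finite_measure_Union) auto
    ultimately show ?thesis
      using 1 moved incl[OF assms(4)] by simp
  next
    case 2
    then have "{S. i \<in> move_member l j S} = {S. l \<in> S} - ?moved"
      using assms by (auto simp: move_member_def)
    moreover have "measure_pmf.prob ?U ({S. l \<in> S} - ?moved)
        = measure_pmf.prob ?U {S. l \<in> S} - measure_pmf.prob ?U ?moved"
      by (rule measure_pmf.finite_measure_Diff) auto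
    ultimately show ?thesis
      using 2 assms moved incl[OF assms(3)] by simp
  next
    case 3
    then have "{S. i \<in> move_member l j S} = {S. i \<in> S}"
      by (auto simp: move_member_def)
    then show ?thesis
      using 3 incl[OF assms(6)] by simp
  qed
qed

lemma prob_bernoulli_mixture:
  assumes "0 \<le> w" "w \<le> 1"
  shows "measure_pmf.prob (bind_pmf (bernoulli_pmf w) (\<lambda>b. if b then P else Q)) E
    = w * measure_pmf.prob P E + (1 - w) * measure_pmf.prob Q E"
  unfolding measure_pmf_bind using assms
  by (subst measure_pmf.measure_bind[where N="count_space UNIV"]) (auto simp: measure_pmf_in_subprob_algebra)

lemma bs_strategy_map_move_member:
  assumes "bs_strategy N k P" "j < N"
  shows "bs_strategy N k (map_pmf (move_member l j) P)"
proof -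
  have "move_member l j S \<subseteq> {..<N} \<and> card (move_member l j S) = k" if "S \<in> set_pmf P" for S
    using assms that by (intro move_member_subset_card) (auto simp: bs_strategy_def)
  then show ?thesis
    by (auto simp: bs_strategy_def)
qed

lemma bs_strategy_bernoulli_mixture:
  assumes "bs_strategy N k P" "bs_strategy N k Q"
  shows "bs_strategy N k (bind_pmf (bernoulli_pmf w) (\<lambda>b. if b then P else Q))"
proof -
  have "set_pmf (bind_pmf (bernoulli_pmf w) (\<lambda>b. if b then P else Q)) \<subseteq> set_pmf P \<union> set_pmf Q"
    by (auto split: if_splits)
  with assms show ?thesis
    unfolding bs_strategy_def by blast
qed

lemma exists_strategy_shifting_marginals:
  assumes "1 \<le> k" "k \<le> N" "l < N" "j < N" "l \<noteq> j"
    and "0 \<le> \<delta>" "\<delta> \<le> real ((N - 2) choose (k - 1)) / real (N choose k)"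
  shows "\<exists>p. bs_strategy N k p \<and>
    (\<forall>i<N. incl_prob p i = real k / real N + (if i = j then \<delta> else if i = l then - \<delta> else 0))"
proof -
  define a where "a = real ((N - 2) choose (k - 1)) / real (N choose k)"
  define w where "w = \<delta> / a"
  have \<delta>: "0 \<le> \<delta>" "\<delta> \<le> a" "0 \<le> a"
    using assms by (simp_all add: a_def)
  have w: "0 \<le> w" "w \<le> 1" "w * a = \<delta>"
    by (cases "a = 0") (use \<delta> in \<open>auto simp: w_def divide_le_eq_1\<close>)
  define U where "U = uniform_subsets N k"
  define p where "p = bind_pmf (bernoulli_pmf w) (\<lambda>b. if b then map_pmf (move_member l j) U else U)"
  have "bs_strategy N k p"
    unfolding p_def U_def using assms
    by (intro bs_strategy_bernoulli_mixture bs_strategy_map_move_member bs_strategy_uniform_subsets)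
  moreover have "incl_prob p i = real k / real N + (if i = j then \<delta> else if i = l then - \<delta> else 0)"
    if "i < N" for i
  proof -
    define c :: real where "c = (if i = j then 1 else if i = l then -1 else 0)"
    have mix: "w * (y + c * a) + (1 - w) * y = y + c * (w * a)" for y
      by (simp add: algebra_simps)
    have "incl_prob p i = w * measure_pmf.prob U {S. i \<in> move_member l j S} + (1 - w) * incl_prob U i"
      using w by (simp add: incl_prob_def p_def prob_bernoulli_mixture vimage_def)
    also have "\<dots> = w * (real k / real N + c * a) + (1 - w) * (real k / real N)"
      using prob_uniform_subsets_move_member[OF assms(1-5) that] incl_prob_uniform_subsets[OF assms(1,2) that]
      by (simp add: U_def a_def c_def)
    also have "\<dots> = real k / real N + c * (w * a)"
      by (rule mix)
    finally show ?thesis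
      using w(3) by (simp add: c_def)
  qed
  ultimately show ?thesis
    by (intro exI[of _ p]) simp
qed

section \<open>Convexity in the inclusion probabilities\<close>

lemma power_ge_tangent:
  fixes y z :: real
  assumes "0 \<le> y" "0 \<le> z"
  shows "z ^ n + real n * z ^ (n - 1) * (y - z) \<le> y ^ n"
proof (induction n)
  case (Suc n)
  show ?case
  proof (cases n)
    case (Suc m)
    have "y * (z ^ n + real n * z ^ (n - 1) * (y - z)) \<le> y ^ Suc n"
      using Suc.IH assms by (simp add: mult_left_mono)
    moreover have "y * (z ^ n + real n * z ^ (n - 1) * (y - z)) - (z ^ Suc n + real (Suc n) * z ^ n * (y - z))
        = real n * z ^ (n - 1) * (y - z)\<^sup>2"
      unfolding Suc by (simp add: algebra_simps power2_eq_square)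
    moreover have "0 \<le> real n * z ^ (n - 1) * (y - z)\<^sup>2"
      using assms by simp
    ultimately show ?thesis
      by (simp add: Suc)
  qed simp
qed simp

lemma sum_power_ge_power_mean:
  fixes q :: "'i \<Rightarrow> real"
  assumes "finite I" "\<forall>i\<in>I. q i \<le> 1" "x \<le> 1" "(\<Sum>i\<in>I. q i) = real (card I) * x"
  shows "real (card I) * (1 - x) ^ n \<le> (\<Sum>i\<in>I. (1 - q i) ^ n)"
proof -
  have "(\<Sum>i\<in>I. (1 - x) ^ n + real n * (1 - x) ^ (n - 1) * ((1 - q i) - (1 - x)))
      = real (card I) * (1 - x) ^ n + real n * (1 - x) ^ (n - 1) * (real (card I) * x - (\<Sum>i\<in>I. q i))"
    by (simp add: sum.distrib sum_distrib_left sum_distrib_right sum_subtractf algebra_simps)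
  moreover have "(\<Sum>i\<in>I. (1 - x) ^ n + real n * (1 - x) ^ (n - 1) * ((1 - q i) - (1 - x)))
      \<le> (\<Sum>i\<in>I. (1 - q i) ^ n)"
    using assms by (intro sum_mono power_ge_tangent) auto
  ultimately show ?thesis
    using assms by simp
qed

definition open_slots :: "(nat \<Rightarrow> bool) \<Rightarrow> nat \<Rightarrow> nat \<Rightarrow> nat" where
  "open_slots \<rho> a t = card {s\<in>{a..<t}. \<rho> s}"

lemma exp_age_eq_sum_power: "exp_age x \<rho> t = 1 + (\<Sum>a\<in>{1..<t}. (1 - x) ^ open_slots \<rho> a t)"
proof -
  have "(\<Prod>s\<in>{a..<t}. if \<rho> s then 1 - x else 1) = (1 - x) ^ open_slots \<rho> a t" for a
    by (simp add: prod.If_cases open_slots_def Int_def)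
  then show ?thesis
    by (simp add: exp_age_def)
qed

lemma sum_total_age_minus:
  fixes q :: "'i \<Rightarrow> real"
  assumes "finite I"
  shows "(\<Sum>i\<in>I. total_age (q i) \<rho> T) - real (card I) * total_age x \<rho> T =
    (\<Sum>t=1..T. \<Sum>a\<in>{1..<t}. (\<Sum>i\<in>I. (1 - q i) ^ open_slots \<rho> a t) - real (card I) * (1 - x) ^ open_slots \<rho> a t)"
proof -
  have "(\<Sum>i\<in>I. total_age (q i) \<rho> T)
      = (\<Sum>t=1..T. real (card I) + (\<Sum>a\<in>{1..<t}. \<Sum>i\<in>I. (1 - q i) ^ open_slots \<rho> a t))"
    unfolding total_age_def exp_age_eq_sum_power
    by (subst sum.swap) (simp add: sum.distrib sum.swap[of _ I])
  moreover have "real (card I) * total_age x \<rho> T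
      = (\<Sum>t=1..T. real (card I) + (\<Sum>a\<in>{1..<t}. real (card I) * (1 - x) ^ open_slots \<rho> a t))"
    unfolding total_age_def exp_age_eq_sum_power by (simp add: sum_distrib_left algebra_simps)
  ultimately show ?thesis
    by (simp add: sum_subtractf[symmetric])
qed

lemma sum_total_age_ge:
  fixes q :: "'i \<Rightarrow> real"
  assumes "finite I" "\<forall>i\<in>I. q i \<le> 1" "x \<le> 1" "(\<Sum>i\<in>I. q i) = real (card I) * x"
  shows "real (card I) * total_age x \<rho> T \<le> (\<Sum>i\<in>I. total_age (q i) \<rho> T)"
proof -
  have "0 \<le> (\<Sum>t=1..T. \<Sum>a\<in>{1..<t}.
      (\<Sum>i\<in>I. (1 - q i) ^ open_slots \<rho> a t) - real (card I) * (1 - x) ^ open_slots \<rho> a t)"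
    using sum_power_ge_power_mean[OF assms] by (intro sum_nonneg) auto
  then show ?thesis
    using sum_total_age_minus[OF assms(1), of q \<rho> T x] by linarith
qed

lemma exists_open_slots_eq_2:
  assumes "2 \<le> open_slots \<rho> 1 T"
  shows "\<exists>t. 1 < t \<and> t \<le> T \<and> open_slots \<rho> 1 t = 2"
  using assms
proof (induction T)
  case (Suc T)
  have "{s\<in>{1..<Suc T}. \<rho> s} \<subseteq> insert T {s\<in>{1..<T}. \<rho> s}"
    by auto
  then have "open_slots \<rho> 1 (Suc T) \<le> card (insert T {s\<in>{1..<T}. \<rho> s})"
    unfolding open_slots_def by (intro card_mono) auto
  then have "open_slots \<rho> 1 (Suc T) \<le> open_slots \<rho> 1 T + 1"
    unfolding open_slots_def by (simp add: card_insert_if split: if_splits)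
  moreover have "open_slots \<rho> 1 (Suc 0) = 0"
    by (simp add: open_slots_def)
  ultimately show ?case
    using Suc by (cases "2 \<le> open_slots \<rho> 1 T"; cases T) (auto intro: le_SucI)
qed (simp add: open_slots_def)

lemma sum_square_deviation:
  fixes q :: "'i \<Rightarrow> real"
  assumes "(\<Sum>i\<in>I. q i) = real (card I) * x"
  shows "(\<Sum>i\<in>I. (1 - q i)\<^sup>2) - real (card I) * (1 - x)\<^sup>2 = (\<Sum>i\<in>I. (q i - x)\<^sup>2)"
proof -
  have "(\<Sum>i\<in>I. (1 - q i)\<^sup>2 - (1 - x)\<^sup>2) = (\<Sum>i\<in>I. (q i - x)\<^sup>2 + 2 * (1 - x) * (x - q i))"
    by (rule sum.cong) (auto simp: power2_eq_square algebra_simps)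
  also have "\<dots> = (\<Sum>i\<in>I. (q i - x)\<^sup>2) + 2 * (1 - x) * (\<Sum>i\<in>I. x - q i)"
    by (simp only: sum.distrib sum_distrib_left)
  also have "(\<Sum>i\<in>I. x - q i) = 0"
    using assms by (simp add: sum_subtractf)
  finally show ?thesis
    by (simp add: sum_subtractf)
qed

(* On a window with exactly two unblocked slots the Jensen gap is the variance of the marginals. *)
lemma sum_total_age_le_imp_const:
  fixes q :: "'i \<Rightarrow> real"
  assumes "finite I" "\<forall>i\<in>I. q i \<le> 1" "x \<le> 1" "(\<Sum>i\<in>I. q i) = real (card I) * x"
    and le: "(\<Sum>i\<in>I. total_age (q i) \<rho> T) \<le> real (card I) * total_age x \<rho> T"
    and open2: "2 \<le> open_slots \<rho> 1 T"
  shows "\<forall>i\<in>I. q i = x"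
proof -
  define D where
    "D t a = (\<Sum>i\<in>I. (1 - q i) ^ open_slots \<rho> a t) - real (card I) * (1 - x) ^ open_slots \<rho> a t" for t a
  have D_nonneg: "0 \<le> D t a" for t a
    unfolding D_def using sum_power_ge_power_mean[OF assms(1-4)] by simp
  obtain t where t: "1 < t" "t \<le> T" "open_slots \<rho> 1 t = 2"
    using exists_open_slots_eq_2[OF open2] by blast
  have "(\<Sum>t=1..T. \<Sum>a\<in>{1..<t}. D t a) \<le> 0"
    using sum_total_age_minus[OF assms(1), of q \<rho> T x] le by (simp add: D_def)
  then have "(\<Sum>t=1..T. \<Sum>a\<in>{1..<t}. D t a) = 0"
    using D_nonneg by (simp add: antisym sum_nonneg)
  then have "(\<Sum>a\<in>{1..<t}. D t a) = 0"
    using D_nonneg t by (subst (asm) sum_nonneg_eq_0_iff) (auto intro: sum_nonneg)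
  then have "D t 1 = 0"
    using D_nonneg t by (subst (asm) sum_nonneg_eq_0_iff) auto
  moreover have "D t 1 = (\<Sum>i\<in>I. (q i - x)\<^sup>2)"
    using sum_square_deviation[OF assms(4)] t(3) by (simp add: D_def)
  ultimately show ?thesis
    using assms(1) by (simp add: sum_nonneg_eq_0_iff)
qed

section \<open>Excess age caused by blocking\<close>

lemma exp_age_unblocked:
  assumes "0 < x" "1 \<le> t"
  shows "exp_age x (\<lambda>_. True) t = (1 - (1 - x) ^ t) / x"
  using assms(2)
proof (induction t rule: nat_induct_at_least)
  case (Suc t)
  then have "exp_age x (\<lambda>_. True) (Suc t) = 1 + (1 - x) * ((1 - (1 - x) ^ t) / x)"
    by (simp add: exp_age_Suc)
  also have "\<dots> = (1 - (1 - x) ^ Suc t) / x"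
    using assms(1) by (simp add: field_simps)
  finally show ?case .
qed (use assms(1) in simp)

lemma total_age_unblocked_bounds:
  assumes "0 < x" "x \<le> 1"
  shows "real T / x - 1 / x\<^sup>2 \<le> total_age x (\<lambda>_. True) T" "total_age x (\<lambda>_. True) T \<le> real T / x"
proof -
  let ?c = "1 - x"
  have "total_age x (\<lambda>_. True) T = (\<Sum>t=1..T. 1 / x - ?c ^ t / x)"
    unfolding total_age_def using assms by (intro sum.cong) (auto simp: exp_age_unblocked diff_divide_distrib)
  then have total: "total_age x (\<lambda>_. True) T = real T / x - (\<Sum>t=1..T. ?c ^ t) / x"
    by (simp add: sum_subtractf sum_divide_distrib)
  have "(\<Sum>t=1..T. ?c ^ t) \<le> (\<Sum>t<Suc T. ?c ^ t)"
    using assms by (intro sum_mono2) auto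
  also have "\<dots> = (1 - ?c ^ Suc T) / x"
    using assms by (simp add: sum_gp_strict field_simps)
  also have "\<dots> \<le> 1 / x"
    using assms by (simp add: divide_right_mono)
  finally have "(\<Sum>t=1..T. ?c ^ t) / x \<le> (1 / x) / x"
    by (rule divide_right_mono) (use assms in simp)
  then have "(\<Sum>t=1..T. ?c ^ t) / x \<le> 1 / x\<^sup>2"
    by (simp add: power2_eq_square)
  moreover have "0 \<le> (\<Sum>t=1..T. ?c ^ t) / x"
    using assms by (simp add: sum_nonneg)
  ultimately show "real T / x - 1 / x\<^sup>2 \<le> total_age x (\<lambda>_. True) T" "total_age x (\<lambda>_. True) T \<le> real T / x"
    unfolding total by linarith+
qed

definition age_excess :: "real \<Rightarrow> (nat \<Rightarrow> bool) \<Rightarrow> nat \<Rightarrow> real" where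
  "age_excess x \<rho> t = exp_age x \<rho> t - exp_age x (\<lambda>_. True) t"

definition total_excess :: "real \<Rightarrow> (nat \<Rightarrow> bool) \<Rightarrow> nat \<Rightarrow> real" where
  "total_excess x \<rho> T = total_age x \<rho> T - total_age x (\<lambda>_. True) T"

(* Only the slots 1, ..., t - 1 can influence the age at slot t. *)
definition blocked_slots :: "(nat \<Rightarrow> bool) \<Rightarrow> nat \<Rightarrow> nat" where
  "blocked_slots \<rho> t = card {s\<in>{1..<t}. \<not> \<rho> s}"

(* The largest excess total age that b blocked slots can cause; a single run of b consecutive
   blocked slots comes close to it. *)
definition excess_bound :: "real \<Rightarrow> nat \<Rightarrow> real" where
  "excess_bound x b = real b * (real b + 1) / 2 + real b * (1 - x) / x"

(* The potential is invariant under unblocked slots, which reduces both bounds on total_excess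
   to bookkeeping over the blocked slots. *)
definition excess_potential :: "real \<Rightarrow> (nat \<Rightarrow> bool) \<Rightarrow> nat \<Rightarrow> real" where
  "excess_potential x \<rho> t = (\<Sum>s=1..t. age_excess x \<rho> s) + (1 - x) / x * age_excess x \<rho> t"

lemma age_excess_0 [simp]: "age_excess x \<rho> 0 = 0"
  and age_excess_1 [simp]: "age_excess x \<rho> (Suc 0) = 0"
  by (simp_all add: age_excess_def exp_age_def)

lemma age_excess_Suc:
  assumes "0 < x" "1 \<le> t"
  shows "age_excess x \<rho> (Suc t)
    = (if \<rho> t then (1 - x) * age_excess x \<rho> t else age_excess x \<rho> t + 1 - (1 - x) ^ t)"
  using assms by (simp add: age_excess_def exp_age_Suc exp_age_unblocked field_simps)

lemma blocked_slots_Suc: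
  assumes "1 \<le> t"
  shows "blocked_slots \<rho> (Suc t) = blocked_slots \<rho> t + (if \<rho> t then 0 else 1)"
proof -
  have "{s\<in>{1..<Suc t}. \<not> \<rho> s} = (if \<rho> t then {s\<in>{1..<t}. \<not> \<rho> s} else insert t {s\<in>{1..<t}. \<not> \<rho> s})"
    using assms by (auto simp: less_Suc_eq)
  then show ?thesis
    by (simp add: blocked_slots_def)
qed

lemma total_excess_eq_potential:
  "total_excess x \<rho> T = excess_potential x \<rho> T - (1 - x) / x * age_excess x \<rho> T"
  by (simp add: total_excess_def excess_potential_def total_age_def age_excess_def sum_subtractf)

lemma excess_potential_Suc:
  assumes "0 < x" "1 \<le> t"
  shows "excess_potential x \<rho> (Suc t) = excess_potential x \<rho> t
    + (if \<rho> t then 0 else age_excess x \<rho> t + (1 - (1 - x) ^ t) / x)"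
  using assms by (simp add: excess_potential_def age_excess_Suc field_simps)

lemma excess_bound_eq: "x \<noteq> 0 \<Longrightarrow> excess_bound x b = real b * (real b - 1) / 2 + real b / x"
  by (simp add: excess_bound_def field_simps)

lemma excess_bound_Suc: "x \<noteq> 0 \<Longrightarrow> excess_bound x (Suc b) = excess_bound x b + real b + 1 / x"
  by (simp add: excess_bound_eq field_simps)

context
  fixes x :: real
  assumes x: "0 < x" "x \<le> 1"
begin

lemma age_excess_bounds: "0 \<le> age_excess x \<rho> t \<and> age_excess x \<rho> t \<le> real (blocked_slots \<rho> t)"
proof (induction t)
  case (Suc t)
  have c: "0 \<le> 1 - x" "1 - x \<le> 1" "0 \<le> (1 - x) ^ t" "(1 - x) ^ t \<le> 1"
    using x by (simp_all add: power_le_one)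
  show ?case
  proof (cases "t = 0")
    case positive: False
    show ?thesis
    proof (cases "\<rho> t")
      case unblocked: True
      have "0 \<le> (1 - x) * age_excess x \<rho> t" "(1 - x) * age_excess x \<rho> t \<le> age_excess x \<rho> t"
        using Suc.IH c by (simp_all add: mult_left_le_one_le)
      with Suc.IH unblocked positive x show ?thesis
        by (simp add: age_excess_Suc blocked_slots_Suc)
    next
      case blocked: False
      have "age_excess x \<rho> (Suc t) = age_excess x \<rho> t + 1 - (1 - x) ^ t"
        "blocked_slots \<rho> (Suc t) = blocked_slots \<rho> t + 1"
        using blocked positive x by (simp_all add: age_excess_Suc blocked_slots_Suc)
      moreover have "real (blocked_slots \<rho> t + 1) = real (blocked_slots \<rho> t) + 1"
        by simp
      ultimately show ?thesis
        using Suc.IH c by (simp only:) linarith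
    qed
  qed simp
qed (simp add: blocked_slots_def)

lemma excess_potential_le: "excess_potential x \<rho> t \<le> excess_bound x (blocked_slots \<rho> t)"
proof (induction t)
  case (Suc t)
  show ?case
  proof (cases "t = 0")
    case False
    have "(1 - (1 - x) ^ t) / x \<le> 1 / x"
      using x by (simp add: divide_right_mono)
    then have "age_excess x \<rho> t + (1 - (1 - x) ^ t) / x \<le> real (blocked_slots \<rho> t) + 1 / x"
      using age_excess_bounds[of \<rho> t] by linarith
    then show ?thesis
      using Suc False x by (simp add: excess_potential_Suc blocked_slots_Suc excess_bound_Suc)
  qed (simp add: excess_potential_def excess_bound_def blocked_slots_def)
qed (simp add: excess_potential_def excess_bound_def blocked_slots_def)

lemma excess_potential_nonneg: "0 \<le> excess_potential x \<rho> t"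
  using age_excess_bounds x unfolding excess_potential_def by (simp add: sum_nonneg)

lemma total_excess_nonneg: "0 \<le> total_excess x \<rho> T"
  using age_excess_bounds unfolding total_excess_def total_age_def age_excess_def
  by (simp add: sum_subtractf[symmetric] sum_nonneg)

lemma total_excess_le: "total_excess x \<rho> T \<le> excess_bound x (blocked_slots \<rho> T)"
proof -
  have "0 \<le> (1 - x) / x * age_excess x \<rho> T"
    using age_excess_bounds[of \<rho> T] x by simp
  then show ?thesis
    using excess_potential_le[of \<rho> T] unfolding total_excess_eq_potential by linarith
qed

lemma total_excess_eq_0: "blocked_slots \<rho> T = 0 \<Longrightarrow> total_excess x \<rho> T = 0"
  using total_excess_le[of \<rho> T] total_excess_nonneg[of \<rho> T] by (simp add: excess_bound_def)

lemma unblocked_stretch: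
  assumes "1 \<le> a" "\<forall>s\<in>{a..<a + j}. \<rho> s"
  shows "excess_potential x \<rho> (a + j) = excess_potential x \<rho> a
    \<and> age_excess x \<rho> (a + j) = (1 - x) ^ j * age_excess x \<rho> a"
  using assms(2)
proof (induction j)
  case (Suc j)
  then show ?case
    using assms(1) x by (simp add: excess_potential_Suc age_excess_Suc)
qed simp

end

definition block_run :: "nat \<Rightarrow> nat \<Rightarrow> nat \<Rightarrow> bool" where
  "block_run M B s \<longleftrightarrow> \<not> (M \<le> s \<and> s < M + B)"

lemma blocked_slots_block_run:
  assumes "1 \<le> M" "m \<le> B"
  shows "blocked_slots (block_run M B) (M + m) = m"
proof -
  have "{s\<in>{1..<M + m}. \<not> block_run M B s} = {M..<M + m}"
    using assms by (auto simp: block_run_def)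
  then show ?thesis
    by (simp add: blocked_slots_def)
qed

context
  fixes x :: real and M B :: nat
  assumes x: "0 < x" "x \<le> 1" and M: "1 \<le> M"
begin

lemma age_excess_block_run:
  "m \<le> B \<Longrightarrow> age_excess x (block_run M B) (M + m) = real m - (1 - x) ^ M * (1 - (1 - x) ^ m) / x"
proof (induction m)
  case 0
  then show ?case
    using age_excess_bounds[OF x, of "block_run M B" M] blocked_slots_block_run[OF M, of 0 B] by simp
next
  case (Suc m)
  then have "\<not> block_run M B (M + m)"
    by (simp add: block_run_def)
  then show ?case
    using Suc x M by (simp add: age_excess_Suc field_simps power_add)
qed

lemma excess_potential_block_run_ge:
  "m \<le> B \<Longrightarrow> excess_bound x m - 2 * real m * (1 - x) ^ M / x \<le> excess_potential x (block_run M B) (M + m)"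
proof (induction m)
  case 0
  then show ?case
    using excess_potential_nonneg[OF x] by (simp add: excess_bound_def)
next
  case (Suc m)
  let ?c = "1 - x" and ?\<rho> = "block_run M B"
  define e where "e = ?c ^ M / x"
  have c: "0 \<le> ?c ^ M" "?c ^ m \<le> 1" "0 \<le> ?c ^ m"
    using x by (simp_all add: power_le_one)
  have IH: "excess_bound x m - 2 * real m * e \<le> excess_potential x ?\<rho> (M + m)"
    using Suc by (simp add: e_def)
  have "\<not> ?\<rho> (M + m)"
    using Suc by (simp add: block_run_def)
  then have step: "excess_potential x ?\<rho> (M + Suc m)
      = excess_potential x ?\<rho> (M + m) + age_excess x ?\<rho> (M + m) + (1 - ?c ^ (M + m)) / x"
    using x M by (simp add: excess_potential_Suc)
  have "?c ^ M * (1 - ?c ^ m) \<le> ?c ^ M" "?c ^ M * ?c ^ m \<le> ?c ^ M"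
    using c by (simp_all add: mult_right_le_one_le)
  then have "?c ^ M * (1 - ?c ^ m) / x \<le> e" "?c ^ (M + m) / x \<le> e"
    using x by (simp_all add: e_def divide_right_mono power_add)
  then have "real m - e \<le> age_excess x ?\<rho> (M + m)" "1 / x - e \<le> (1 - ?c ^ (M + m)) / x"
    using Suc age_excess_block_run[of m] by (simp_all add: diff_divide_distrib)
  moreover have "2 * real (Suc m) * ?c ^ M / x = 2 * real m * e + 2 * e"
    by (simp add: e_def ring_distribs add_divide_distrib)
  moreover have "excess_bound x (Suc m) = excess_bound x m + real m + 1 / x"
    using x by (simp add: excess_bound_Suc)
  ultimately show ?case
    using IH step by linarith
qed

lemma total_excess_block_run_ge:
  assumes "M + B + M \<le> T"
  shows "excess_bound x B - 3 * real B * (1 - x) ^ M / x \<le> total_excess x (block_run M B) T"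
proof -
  let ?c = "1 - x" and ?\<rho> = "block_run M B"
  define J where "J = T - (M + B)"
  have T: "T = M + B + J" and "M \<le> J"
    using assms by (simp_all add: J_def)
  have "\<forall>s\<in>{M + B..<M + B + J}. ?\<rho> s"
    by (simp add: block_run_def)
  then have stretch: "excess_potential x ?\<rho> T = excess_potential x ?\<rho> (M + B)"
      "age_excess x ?\<rho> T = ?c ^ J * age_excess x ?\<rho> (M + B)"
    using unblocked_stretch[OF x, of "M + B" J ?\<rho>] M T by auto
  have "age_excess x ?\<rho> (M + B) \<le> real B"
    using age_excess_bounds[OF x, of ?\<rho> "M + B"] blocked_slots_block_run[OF M, of B B] by simp
  moreover have "?c ^ J \<le> ?c ^ M"
    using x \<open>M \<le> J\<close> by (simp add: power_decreasing)
  ultimately have "age_excess x ?\<rho> T \<le> ?c ^ M * real B"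
    using stretch age_excess_bounds[OF x, of ?\<rho> "M + B"] x by (simp add: mult_mono)
  moreover have "?c * age_excess x ?\<rho> T \<le> age_excess x ?\<rho> T"
    using x age_excess_bounds[OF x, of ?\<rho> T] by (simp add: mult_left_le_one_le)
  ultimately have "?c / x * age_excess x ?\<rho> T \<le> real B * (?c ^ M / x)"
    using x by (simp add: divide_right_mono mult.commute)
  moreover have "excess_bound x B - 2 * real B * (?c ^ M / x) \<le> excess_potential x ?\<rho> (M + B)"
    using excess_potential_block_run_ge[of B] by simp
  moreover have "3 * real B * ?c ^ M / x = 2 * real B * (?c ^ M / x) + real B * (?c ^ M / x)"
    by (simp add: field_simps)
  ultimately show ?thesis
    using stretch unfolding total_excess_eq_potential by linarith
qed

end

lemma excess_bound_le_linear:
  assumes "b + 1 \<le> B"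
  shows "excess_bound x b \<le> real b * (real B / 2 + (1 - x) / x)"
proof -
  have "real b * (real b + 1) \<le> real b * real B"
    using assms by (intro mult_left_mono) auto
  then show ?thesis
    by (simp add: excess_bound_def algebra_simps)
qed

lemma blocking_concentrated_if_excess_large:
  fixes b :: "'i \<Rightarrow> nat"
  assumes "finite I" "0 < x" "x \<le> 1" "(\<Sum>i\<in>I. b i) \<le> B" "E < real B / 2"
    and large: "excess_bound x B - E \<le> (\<Sum>i\<in>I. excess_bound x (b i))"
  shows "\<exists>j\<in>I. b j = B \<and> (\<forall>i\<in>I. i \<noteq> j \<longrightarrow> b i = 0)"
proof (rule ccontr)
  assume not_concentrated: "\<not> ?thesis"
  let ?\<kappa> = "(1 - x) / x"
  have less: "b i + 1 \<le> B" if "i \<in> I" for i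
  proof (rule ccontr)
    assume "\<not> b i + 1 \<le> B"
    moreover have "b i \<le> B"
      using member_le_sum[of i I b] assms(1,4) that by simp
    ultimately have "b i = B"
      by simp
    moreover have "b i' = 0" if "i' \<in> I" "i' \<noteq> i" for i'
    proof -
      have "b i + b i' = (\<Sum>i''\<in>{i, i'}. b i'')"
        using that by simp
      also have "\<dots> \<le> (\<Sum>i''\<in>I. b i'')"
        using assms(1) \<open>i \<in> I\<close> that by (intro sum_mono2) auto
      finally show ?thesis
        using assms(4) \<open>b i = B\<close> by simp
    qed
    ultimately show False
      using not_concentrated that by blast
  qed
  have "(\<Sum>i\<in>I. excess_bound x (b i)) \<le> (\<Sum>i\<in>I. real (b i) * (real B / 2 + ?\<kappa>))"
    using less by (intro sum_mono excess_bound_le_linear)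
  also have "\<dots> = (\<Sum>i\<in>I. real (b i)) * (real B / 2 + ?\<kappa>)"
    by (simp add: sum_distrib_right)
  also have "\<dots> \<le> real B * (real B / 2 + ?\<kappa>)"
    using assms(2-4) by (intro mult_right_mono) (simp_all flip: of_nat_sum)
  also have "\<dots> = excess_bound x B - real B / 2"
    by (simp add: excess_bound_def field_simps)
  finally show False
    using large assms(5) by linarith
qed

section \<open>Blocking matrices\<close>

lemma bij_betw_rotate: "bij_betw (\<lambda>j. (j + r) mod N) {..<N} {..<N::nat}"
proof (cases "N = 0")
  case False
  have "inj_on (\<lambda>j. (j + r) mod N) {..<N}"
  proof (rule inj_onI)
    fix a b assume "a \<in> {..<N}" "b \<in> {..<N}" and eq: "(a + r) mod N = (b + r) mod N"
    from eq have "a mod N = b mod N"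
      by (auto simp: nat_mod_eq_iff)
    with \<open>a \<in> {..<N}\<close> \<open>b \<in> {..<N}\<close> show "a = b"
      by simp
  qed
  with False show ?thesis
    by (intro bij_betw_imageI endo_inj_surj) auto
qed (simp add: bij_betw_def)

lemma sum_rotate:
  fixes f :: "nat \<Rightarrow> 'a::comm_monoid_add"
  shows "(\<Sum>j<N. f ((j + r) mod N)) = (\<Sum>j<N. f j)"
  using sum.reindex_bij_betw[OF bij_betw_rotate[of r N], of f] by simp

lemma sum_rotations_le:
  fixes f :: "nat \<Rightarrow> 'a \<Rightarrow> real"
  assumes "\<And>r. (\<Sum>i<N. f i (g ((i + r) mod N))) \<le> (\<Sum>i<N. f i (g i))"
  shows "(\<Sum>j<N. \<Sum>i<N. f i (g j)) \<le> real N * (\<Sum>i<N. f i (g i))"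
proof -
  have "(\<Sum>j<N. \<Sum>i<N. f i (g j)) = (\<Sum>i<N. \<Sum>j<N. f i (g j))"
    by (rule sum.swap)
  also have "\<dots> = (\<Sum>i<N. \<Sum>r<N. f i (g ((r + i) mod N)))"
    by (intro sum.cong refl sum_rotate[symmetric])
  also have "\<dots> = (\<Sum>r<N. \<Sum>i<N. f i (g ((i + r) mod N)))"
    by (subst sum.swap) (simp add: add.commute)
  also have "\<dots> \<le> (\<Sum>r<N. \<Sum>i<N. f i (g i))"
    by (rule sum_mono) (rule assms)
  finally show ?thesis
    by simp
qed

lemma feasible_rotate:
  assumes "feasible N T \<alpha> ka \<sigma>"
  shows "feasible N T \<alpha> ka (\<lambda>i. \<sigma> ((i + r) mod N))"
proof -
  have "(\<Sum>i<N. \<Sum>t=1..T. 1 - real (of_bool (\<sigma> ((i + r) mod N) t)))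
      = (\<Sum>i<N. \<Sum>t=1..T. 1 - real (of_bool (\<sigma> i t)))"
    by (rule sum_rotate[where f="\<lambda>j. \<Sum>t=1..T. 1 - real (of_bool (\<sigma> j t))"])
  moreover have "(\<Sum>i<N. 1 - real (of_bool (\<sigma> ((i + r) mod N) t))) = (\<Sum>i<N. 1 - real (of_bool (\<sigma> i t)))" for t
    by (rule sum_rotate[where f="\<lambda>j. 1 - real (of_bool (\<sigma> j t))"])
  ultimately show ?thesis
    using assms unfolding feasible_def by simp
qed

lemma feasible_single_block_run:
  assumes "0 < N" "1 \<le> M" "M + B \<le> T + 1" "real B \<le> \<alpha> * real T" "1 \<le> ka"
  shows "feasible N T \<alpha> ka (\<lambda>i. if i = 0 then block_run M B else (\<lambda>_. True))"
proof -
  let ?\<sigma> = "\<lambda>i. if i = 0 then block_run M B else (\<lambda>_. True)"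
  have slot: "(\<Sum>i<N. 1 - real (of_bool (?\<sigma> i t))) = 1 - real (of_bool (block_run M B t))" for t
  proof -
    have "(\<Sum>i<N. 1 - real (of_bool (?\<sigma> i t)))
        = (\<Sum>i<N. if i = 0 then 1 - real (of_bool (block_run M B t)) else 0)"
      by (intro sum.cong) auto
    then show ?thesis
      using assms(1) by simp
  qed
  have "{t\<in>{1..T}. \<not> block_run M B t} = {M..<M + B}"
    using assms(2,3) by (auto simp: block_run_def)
  then have "(\<Sum>t=1..T. 1 - real (of_bool (block_run M B t))) = real B"
    by (simp add: of_bool_not_iff[symmetric] sum_of_bool_eq Int_def)
  moreover have "(\<Sum>i<N. \<Sum>t=1..T. 1 - real (of_bool (?\<sigma> i t))) = (\<Sum>t=1..T. 1 - real (of_bool (block_run M B t)))"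
    by (subst sum.swap) (simp only: slot)
  ultimately have "(\<Sum>i<N. \<Sum>t=1..T. 1 - real (of_bool (?\<sigma> i t))) = real B"
    by simp
  then show ?thesis
    unfolding feasible_def slot using assms(4,5) by simp
qed

lemma sum_blocked_slots_le:
  assumes "feasible N T \<alpha> ka \<sigma>"
  shows "(\<Sum>i<N. real (blocked_slots (\<sigma> i) T)) \<le> \<alpha> * real T"
proof -
  have "real (blocked_slots \<rho> T) \<le> (\<Sum>t=1..T. 1 - real (of_bool (\<rho> t)))" for \<rho>
  proof -
    have "blocked_slots \<rho> T \<le> card {t\<in>{1..T}. \<not> \<rho> t}"
      unfolding blocked_slots_def by (intro card_mono) auto
    moreover have "(\<Sum>t=1..T. 1 - real (of_bool (\<rho> t))) = real (card {t\<in>{1..T}. \<not> \<rho> t})"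
      by (simp add: of_bool_not_iff[symmetric] sum_of_bool_eq Int_def)
    ultimately show ?thesis
      by simp
  qed
  then have "(\<Sum>i<N. real (blocked_slots (\<sigma> i) T)) \<le> (\<Sum>i<N. \<Sum>t=1..T. 1 - real (of_bool (\<sigma> i t)))"
    by (intro sum_mono)
  then show ?thesis
    using assms unfolding feasible_def by linarith
qed

lemma open_slots_add_blocked_slots: "open_slots \<rho> 1 T + blocked_slots \<rho> T = T - 1"
proof -
  have "{s\<in>{1..<T}. \<rho> s} \<union> {s\<in>{1..<T}. \<not> \<rho> s} = {1..<T}"
    by auto
  moreover have "card ({s\<in>{1..<T}. \<rho> s} \<union> {s\<in>{1..<T}. \<not> \<rho> s})
      = card {s\<in>{1..<T}. \<rho> s} + card {s\<in>{1..<T}. \<not> \<rho> s}"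
    by (rule card_Un_disjoint) auto
  ultimately have "card {s\<in>{1..<T}. \<rho> s} + card {s\<in>{1..<T}. \<not> \<rho> s} = card {1..<T}"
    by simp
  then show ?thesis
    by (simp add: open_slots_def blocked_slots_def)
qed

lemma open_slots_ge_2:
  assumes "feasible N T \<alpha> ka \<sigma>" "i < N" "\<alpha> * real T + 3 \<le> real T"
  shows "2 \<le> open_slots (\<sigma> i) 1 T"
proof -
  have "real (blocked_slots (\<sigma> i) T) \<le> (\<Sum>i'<N. real (blocked_slots (\<sigma> i') T))"
    by (rule member_le_sum) (use assms(2) in auto)
  then have "real (blocked_slots (\<sigma> i) T) + 3 \<le> real T"
    using sum_blocked_slots_le[OF assms(1)] assms(3) by linarith
  then show ?thesis
    using open_slots_add_blocked_slots[of "\<sigma> i" T] by linarith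
qed

section \<open>Moving scheduling probability towards a blocked user\<close>

lemma inverse_shift_sum_le:
  fixes x \<delta> c T :: real
  assumes x: "0 < x" and \<delta>: "0 < \<delta>" "\<delta> \<le> c * x / 8" and "c \<le> 1" "0 \<le> T"
  shows "T / (x + \<delta>) + T / (x - \<delta>) - 2 * T / x \<le> 16 / 63 * (c * T * \<delta> / x\<^sup>2)"
proof -
  have "c * x \<le> x"
    using \<open>c \<le> 1\<close> x by (simp add: mult_right_le_one_le)
  then have \<delta>x: "\<delta> \<le> x / 8"
    using \<delta> by linarith
  then have "\<delta>\<^sup>2 \<le> x\<^sup>2 / 64"
    using \<delta> power_mono[OF \<delta>x, of 2] by (simp add: power_divide)
  then have sq: "63 / 64 * x\<^sup>2 \<le> x\<^sup>2 - \<delta>\<^sup>2"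
    by simp
  moreover have "0 < x\<^sup>2"
    using x by simp
  ultimately have sq_pos: "0 < x\<^sup>2 - \<delta>\<^sup>2"
    by linarith
  have "x - \<delta> \<noteq> 0" "x + \<delta> \<noteq> 0"
    using x \<delta> \<delta>x by auto
  with sq_pos have "T / (x + \<delta>) + T / (x - \<delta>) - 2 * T / x = 2 * T * \<delta>\<^sup>2 / (x * (x\<^sup>2 - \<delta>\<^sup>2))"
    using x by (simp add: field_simps power2_eq_square)
  also have "\<dots> \<le> 2 * T * \<delta>\<^sup>2 / (x * (63 / 64 * x\<^sup>2))"
    using sq sq_pos x \<open>0 \<le> T\<close> by (intro divide_left_mono mult_left_mono) simp_all
  also have "\<dots> \<le> 2 * T * \<delta> * (c * x / 8) / (x * (63 / 64 * x\<^sup>2))"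
  proof (rule divide_right_mono)
    have "\<delta> * \<delta> \<le> \<delta> * (c * x / 8)"
      using \<delta> by (intro mult_left_mono) auto
    then have "2 * T * (\<delta> * \<delta>) \<le> 2 * T * (\<delta> * (c * x / 8))"
      by (rule mult_left_mono) (use \<open>0 \<le> T\<close> in simp)
    then show "2 * T * \<delta>\<^sup>2 \<le> 2 * T * \<delta> * (c * x / 8)"
      by (simp only: power2_eq_square mult.assoc)
  qed (use x in simp)
  also have "\<dots> = 16 / 63 * (c * T * \<delta> / x\<^sup>2)"
    using x by (simp add: field_simps power2_eq_square)
  finally show ?thesis .
qed

lemma shift_gain_dominates_loss:
  fixes x \<delta> \<alpha> T :: real
  assumes x: "0 < x" "x \<le> 1" and \<delta>: "0 < \<delta>" "\<delta> \<le> \<alpha> * x / 8" and "\<alpha> \<le> 1" and T: "6 \<le> \<alpha> * \<delta> * T"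
  shows "T / (x + \<delta>) + T / (x - \<delta>) + 2 / x\<^sup>2 + \<alpha> * T * \<delta> / (4 * x)
    < 2 * T / x + \<alpha> * T * (1 / x - 1 / (x + \<delta>))"
proof -
  define K where "K = \<alpha> * T * \<delta> / x\<^sup>2"
  have "0 < \<alpha> * x"
    using \<delta> by linarith
  then have "0 < \<alpha>"
    using x by (simp add: zero_less_mult_iff)
  then have "0 < \<alpha> * \<delta>"
    using \<delta> by simp
  moreover have "0 < \<alpha> * \<delta> * T"
    using T by linarith
  ultimately have "0 < T"
    by (metis zero_less_mult_pos)
  have convex: "T / (x + \<delta>) + T / (x - \<delta>) - 2 * T / x \<le> 16 / 63 * K"
    unfolding K_def using inverse_shift_sum_le[OF x(1) \<delta> \<open>\<alpha> \<le> 1\<close>] \<open>0 < T\<close> by simp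
  have "\<alpha> * T * \<delta> / (4 * x) \<le> \<alpha> * T * \<delta> / (4 * x\<^sup>2)"
    using x \<delta> \<open>0 < \<alpha>\<close> \<open>0 < T\<close> by (intro divide_left_mono) (auto simp: power2_eq_square mult_left_le_one_le)
  then have cost: "\<alpha> * T * \<delta> / (4 * x) \<le> K / 4"
    by (simp add: K_def)
  have "\<alpha> * x \<le> x"
    using \<open>\<alpha> \<le> 1\<close> x by (simp add: mult_left_le_one_le)
  then have "1 / x - 1 / (x + \<delta>) = \<delta> / (x * (x + \<delta>))"
    using x \<delta> by (simp add: field_simps)
  also have "\<dots> \<ge> \<delta> / (x * (9 / 8 * x))"
    using x \<delta> \<open>\<alpha> * x \<le> x\<close> by (intro divide_left_mono mult_left_mono) auto
  finally have "\<alpha> * T * (8 / 9 * \<delta> / x\<^sup>2) \<le> \<alpha> * T * (1 / x - 1 / (x + \<delta>))"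
    using \<open>0 < \<alpha>\<close> \<open>0 < T\<close> x by (intro mult_left_mono) (auto simp: field_simps power2_eq_square)
  then have gain: "8 / 9 * K \<le> \<alpha> * T * (1 / x - 1 / (x + \<delta>))"
    by (simp add: K_def)
  have "6 / x\<^sup>2 \<le> K"
    unfolding K_def using T by (intro divide_right_mono) (simp_all add: mult_ac)
  then have "2 / x\<^sup>2 < 97 / 252 * K"
    using x by (simp add: field_simps)
  \<comment> \<open>16/63 + 1/4 - 8/9 = -97/252\<close>
  with convex cost gain show ?thesis
    by linarith
qed

lemma sum_diff_eq_two_points:
  fixes f g :: "'a \<Rightarrow> 'b::ab_group_add"
  assumes "finite A" "j \<in> A" "l \<in> A" "j \<noteq> l" "\<forall>i\<in>A - {j, l}. f i = g i"
  shows "sum f A - sum g A = (f j - g j) + (f l - g l)"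
proof -
  have "sum f A - sum g A = (\<Sum>i\<in>A. f i - g i)"
    by (simp add: sum_subtractf)
  also have "\<dots> = (\<Sum>i\<in>{j, l}. f i - g i)"
    by (rule sum.mono_neutral_right) (use assms in auto)
  also have "\<dots> = (f j - g j) + (f l - g l)"
    using assms(4) by simp
  finally show ?thesis .
qed

lemma total_age_shift_lt:
  assumes x: "0 < x" "x \<le> 1" and \<delta>: "0 < \<delta>" "\<delta> \<le> \<alpha> * x / 8" "x + \<delta> \<le> 1" and "\<alpha> \<le> 1"
    and T: "real B = \<alpha> * real T" "6 \<le> \<alpha> * \<delta> * real T"
    and M: "(1 - x) ^ M \<le> \<delta> / 12"
    and \<rho>: "blocked_slots \<rho> T = B" "excess_bound x B - 3 * real B * (1 - x) ^ M / x \<le> total_excess x \<rho> T"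
    and \<rho>': "blocked_slots \<rho>' T = 0"
  shows "total_age (x + \<delta>) \<rho> T + total_age (x - \<delta>) \<rho>' T < total_age x \<rho> T + total_age x \<rho>' T"
proof -
  let ?C = "\<lambda>y. total_age y (\<lambda>_. True) T"
  have "\<alpha> * x \<le> x"
    using \<open>\<alpha> \<le> 1\<close> \<delta> x by (simp add: mult_left_le_one_le)
  then have x\<delta>: "0 < x - \<delta>" "x - \<delta> \<le> 1" "0 < x + \<delta>"
    using x \<delta> by linarith+
  have split: "total_age y \<rho>'' T = ?C y + total_excess y \<rho>'' T" for y \<rho>''
    by (simp add: total_excess_def)
  have "total_excess (x + \<delta>) \<rho> T \<le> excess_bound (x + \<delta>) B"
    using total_excess_le[OF x\<delta>(3) \<delta>(3), of \<rho> T] \<rho>(1) by simp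
  also have "\<dots> = excess_bound x B - \<alpha> * real T * (1 / x - 1 / (x + \<delta>))"
    using x x\<delta> T(1) by (simp add: excess_bound_eq algebra_simps)
  finally have "total_excess (x + \<delta>) \<rho> T \<le> excess_bound x B - \<alpha> * real T * (1 / x - 1 / (x + \<delta>))" .
  then have upper: "total_age (x + \<delta>) \<rho> T + total_age (x - \<delta>) \<rho>' T
      \<le> ?C (x + \<delta>) + ?C (x - \<delta>) + excess_bound x B - \<alpha> * real T * (1 / x - 1 / (x + \<delta>))"
    using split[of "x + \<delta>" \<rho>] split[of "x - \<delta>" \<rho>'] total_excess_eq_0[OF x\<delta>(1,2) \<rho>'] by linarith
  have "3 * real B * (1 - x) ^ M \<le> 3 * real B * (\<delta> / 12)"
    using M by (intro mult_left_mono) auto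
  also have "\<dots> = \<alpha> * real T * \<delta> / 4"
    using T(1) by simp
  finally have "3 * real B * (1 - x) ^ M / x \<le> (\<alpha> * real T * \<delta> / 4) / x"
    using x by (intro divide_right_mono) auto
  then have lower: "2 * ?C x + excess_bound x B - \<alpha> * real T * \<delta> / (4 * x) \<le> total_age x \<rho> T + total_age x \<rho>' T"
    using split[of x \<rho>] split[of x \<rho>'] total_excess_eq_0[OF x \<rho>'] \<rho>(2) by simp
  have "?C (x + \<delta>) + ?C (x - \<delta>) + \<alpha> * real T * \<delta> / (4 * x) < 2 * ?C x + \<alpha> * real T * (1 / x - 1 / (x + \<delta>))"
    using total_age_unblocked_bounds(2)[OF x\<delta>(3) \<delta>(3), where T=T]
      total_age_unblocked_bounds(2)[OF x\<delta>(1,2), where T=T]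
      total_age_unblocked_bounds(1)[OF x, where T=T] shift_gain_dominates_loss[OF x \<delta>(1,2) \<open>\<alpha> \<le> 1\<close> T(2)]
    by linarith
  with upper lower show ?thesis
    by linarith
qed

lemma exists_better_strategy:
  assumes k: "1 \<le> k" "k < N" and x: "x = real k / real N" and marg: "\<forall>i<N. incl_prob p i = x"
    and j: "j < N" "blocked_slots (\<sigma> j) T = B" "\<forall>i<N. i \<noteq> j \<longrightarrow> blocked_slots (\<sigma> i) T = 0"
      "excess_bound x B - 3 * real B * (1 - x) ^ M / x \<le> total_excess x (\<sigma> j) T"
    and \<delta>: "0 < \<delta>" "\<delta> \<le> \<alpha> * x / 8" "\<delta> \<le> real ((N - 2) choose (k - 1)) / real (N choose k)"
    and "\<alpha> \<le> 1" and M: "(1 - x) ^ M \<le> \<delta> / 12" and T: "real B = \<alpha> * real T" "6 \<le> \<alpha> * \<delta> * real T"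
  shows "\<exists>p'. bs_strategy N k p' \<and> payoff N T p' \<sigma> < payoff N T p \<sigma>"
proof -
  have "0 < x" "x \<le> 1" "0 < N"
    using k by (simp_all add: x)
  have "0 < T"
    using T(2) by (cases T) auto
  obtain l where l: "l < N" "l \<noteq> j"
    using k by (cases "j = 0") (auto intro!: exI[of _ "if j = 0 then 1 else 0"])
  obtain p' where p': "bs_strategy N k p'"
      "\<forall>i<N. incl_prob p' i = x + (if i = j then \<delta> else if i = l then - \<delta> else 0)"
    using exists_strategy_shifting_marginals[OF k(1) less_imp_le[OF k(2)] l(1) j(1) l(2)
        less_imp_le[OF \<delta>(1)] \<delta>(3)]
    unfolding x by blast
  have "x + \<delta> \<le> 1"
    using p'(2)[rule_format, OF j(1)] measure_pmf.prob_le_1[of p' "{S. j \<in> S}"] unfolding incl_prob_def by simp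
  have "(\<Sum>i<N. total_age (incl_prob p' i) (\<sigma> i) T) - (\<Sum>i<N. total_age x (\<sigma> i) T)
      = (total_age (x + \<delta>) (\<sigma> j) T - total_age x (\<sigma> j) T) + (total_age (x - \<delta>) (\<sigma> l) T - total_age x (\<sigma> l) T)"
    using sum_diff_eq_two_points[of "{..<N}" j l "\<lambda>i. total_age (incl_prob p' i) (\<sigma> i) T"
        "\<lambda>i. total_age x (\<sigma> i) T"]
      j(1) l p'(2) by simp
  moreover have "total_age (x + \<delta>) (\<sigma> j) T + total_age (x - \<delta>) (\<sigma> l) T
      < total_age x (\<sigma> j) T + total_age x (\<sigma> l) T"
    using j(3) l by (intro total_age_shift_lt[OF \<open>0 < x\<close> \<open>x \<le> 1\<close> \<delta>(1,2) \<open>x + \<delta> \<le> 1\<close> \<open>\<alpha> \<le> 1\<close> T M j(2,4)]) simp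
  ultimately have "\<not> (\<Sum>i<N. total_age (incl_prob p i) (\<sigma> i) T) \<le> (\<Sum>i<N. total_age (incl_prob p' i) (\<sigma> i) T)"
    using marg by simp
  then have "\<not> payoff N T p \<sigma> \<le> payoff N T p' \<sigma>"
    unfolding payoff_le_payoff_iff[OF \<open>0 < N\<close> \<open>0 < T\<close>] .
  with p'(1) show ?thesis
    by auto
qed

section \<open>Equilibria\<close>

lemma nash_eq_jensen_tight:
  assumes ne: "nash_eq N k T \<alpha> ka p \<sigma>" and k: "1 \<le> k" "k \<le> N" and "0 < T"
  shows "(\<Sum>i\<in>{..<N}. total_age (incl_prob p i) (\<sigma> 0) T)
    \<le> real (card {..<N}) * total_age (real k / real N) (\<sigma> 0) T"
proof -
  let ?x = "real k / real N" and ?q = "incl_prob p"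
  have N: "0 < N"
    using k by simp
  have bs: "bs_strategy N k p" and feas: "feasible N T \<alpha> ka \<sigma>"
    using ne by (simp_all add: nash_eq_def)
  have "payoff N T p \<sigma> \<le> payoff N T (uniform_subsets N k) \<sigma>"
    using ne k by (simp add: nash_eq_def bs_strategy_uniform_subsets)
  then have bs_opt: "(\<Sum>i<N. total_age (?q i) (\<sigma> i) T) \<le> (\<Sum>i<N. total_age ?x (\<sigma> i) T)"
    using N \<open>0 < T\<close> k by (simp add: payoff_le_payoff_iff incl_prob_uniform_subsets)
  have adv_opt: "(\<Sum>j<N. \<Sum>i<N. total_age (?q i) (\<sigma> j) T) \<le> real N * (\<Sum>i<N. total_age (?q i) (\<sigma> i) T)"
  proof (rule sum_rotations_le)
    fix r
    have "payoff N T p (\<lambda>i. \<sigma> ((i + r) mod N)) \<le> payoff N T p \<sigma>"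
      using ne feasible_rotate[OF feas] by (simp add: nash_eq_def)
    then show "(\<Sum>i<N. total_age (?q i) (\<sigma> ((i + r) mod N)) T) \<le> (\<Sum>i<N. total_age (?q i) (\<sigma> i) T)"
      using N \<open>0 < T\<close> by (simp add: payoff_le_payoff_iff)
  qed
  define D where "D j = (\<Sum>i<N. total_age (?q i) (\<sigma> j) T) - real N * total_age ?x (\<sigma> j) T" for j
  \<comment> \<open>D j \<ge> 0 by convexity, while averaging over the rotated blocking matrices gives sum D \<le> 0\<close>
  have "0 \<le> D j" for j
    using sum_total_age_ge[of "{..<N}" ?q ?x] sum_incl_prob[OF bs] N k by (simp add: D_def incl_prob_def)
  then have "D 0 \<le> (\<Sum>j<N. D j)"
    by (intro member_le_sum) (use N in auto)
  also have "\<dots> \<le> real N * ((\<Sum>i<N. total_age (?q i) (\<sigma> i) T) - (\<Sum>j<N. total_age ?x (\<sigma> j) T))"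
    using adv_opt by (simp add: D_def sum_subtractf sum_distrib_left right_diff_distrib)
  also have "\<dots> \<le> 0"
    using bs_opt by (simp add: mult_nonneg_nonpos)
  finally show ?thesis
    by (simp add: D_def)
qed

lemma nash_eq_uniform_marginals:
  assumes ne: "nash_eq N k T \<alpha> ka p \<sigma>" and k: "1 \<le> k" "k \<le> N"
    and \<alpha>: "0 \<le> \<alpha>" and T: "\<alpha> * real T + 3 \<le> real T"
  shows "\<forall>i<N. incl_prob p i = real k / real N"
proof -
  have N: "0 < N" and "0 < T"
    using k T \<alpha> by (auto intro: ccontr)
  have bs: "bs_strategy N k p" and feas: "feasible N T \<alpha> ka \<sigma>"
    using ne by (simp_all add: nash_eq_def)
  have "\<forall>i\<in>{..<N}. incl_prob p i = real k / real N"
  proof (rule sum_total_age_le_imp_const)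
    show "(\<Sum>i\<in>{..<N}. incl_prob p i) = real (card {..<N}) * (real k / real N)"
      using sum_incl_prob[OF bs] N by simp
    show "2 \<le> open_slots (\<sigma> 0) 1 T"
      using open_slots_ge_2[OF feas N T] .
  qed (use nash_eq_jensen_tight[OF ne k \<open>0 < T\<close>] k in \<open>simp_all add: incl_prob_def\<close>)
  then show ?thesis
    by simp
qed

lemma nash_eq_block_run_excess_le:
  assumes ne: "nash_eq N k T \<alpha> ka p \<sigma>" and marg: "\<forall>i<N. incl_prob p i = x"
    and N: "0 < N" and "1 \<le> ka" "1 \<le> M" "M + B \<le> T" "real B = \<alpha> * real T"
  shows "total_excess x (block_run M B) T \<le> (\<Sum>i<N. total_excess x (\<sigma> i) T)"
proof -
  let ?run = "\<lambda>i. if i = 0 then block_run M B else (\<lambda>_. True)"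
  have split: "(\<Sum>i<N. total_age x (\<rho> i) T) = real N * total_age x (\<lambda>_. True) T + (\<Sum>i<N. total_excess x (\<rho> i) T)"
    for \<rho>
    by (simp add: total_excess_def sum_subtractf)
  have "(\<Sum>i<N. total_excess x (?run i) T) = (\<Sum>i<N. if i = 0 then total_excess x (block_run M B) T else 0)"
    by (intro sum.cong) (auto simp: total_excess_def)
  also have "\<dots> = total_excess x (block_run M B) T"
    using N by simp
  moreover have "payoff N T p ?run \<le> payoff N T p \<sigma>"
    using ne feasible_single_block_run[of N M B T \<alpha> ka] assms by (simp add: nash_eq_def)
  then have "(\<Sum>i<N. total_age x (?run i) T) \<le> (\<Sum>i<N. total_age x (\<sigma> i) T)"
    using assms marg by (simp add: payoff_le_payoff_iff)
  ultimately show ?thesis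
    unfolding split by simp
qed

lemma nash_eq_blocking_concentrated:
  assumes ne: "nash_eq N k T \<alpha> ka p \<sigma>" and marg: "\<forall>i<N. incl_prob p i = x"
    and x: "0 < x" "x \<le> 1" and N: "0 < N" and ka: "1 \<le> ka"
    and B: "real B = \<alpha> * real T" "1 \<le> B" and M: "1 \<le> M" "M + B + M \<le> T"
    and small: "(1 - x) ^ M < x / 6"
  shows "\<exists>j<N. blocked_slots (\<sigma> j) T = B \<and> (\<forall>i<N. i \<noteq> j \<longrightarrow> blocked_slots (\<sigma> i) T = 0)
    \<and> excess_bound x B - 3 * real B * (1 - x) ^ M / x \<le> total_excess x (\<sigma> j) T"
proof -
  define E where "E = 3 * real B * (1 - x) ^ M / x"
  have adv: "excess_bound x B - E \<le> (\<Sum>i<N. total_excess x (\<sigma> i) T)"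
    using nash_eq_block_run_excess_le[OF ne marg N ka M(1) _ B(1)] total_excess_block_run_ge[OF x M] M(2)
    unfolding E_def by fastforce
  have "real (\<Sum>i<N. blocked_slots (\<sigma> i) T) \<le> real B"
    using sum_blocked_slots_le[of N T \<alpha> ka \<sigma>] ne B(1) by (simp add: nash_eq_def)
  then have "(\<Sum>i<N. blocked_slots (\<sigma> i) T) \<le> B"
    by (simp only: of_nat_le_iff)
  moreover have "E < real B / 2"
  proof -
    have "real B * (1 - x) ^ M < real B * (x / 6)"
      using small B(2) by (intro mult_strict_left_mono) auto
    then show ?thesis
      using x by (simp add: E_def field_simps)
  qed
  moreover have "(\<Sum>i<N. total_excess x (\<sigma> i) T) \<le> (\<Sum>i<N. excess_bound x (blocked_slots (\<sigma> i) T))"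
    by (intro sum_mono total_excess_le[OF x])
  ultimately obtain j where j: "j < N" "blocked_slots (\<sigma> j) T = B"
      "\<forall>i<N. i \<noteq> j \<longrightarrow> blocked_slots (\<sigma> i) T = 0"
    using blocking_concentrated_if_excess_large[of "{..<N}" x "\<lambda>i. blocked_slots (\<sigma> i) T" B E] adv x by auto
  have "(\<Sum>i<N. total_excess x (\<sigma> i) T) = (\<Sum>i<N. if i = j then total_excess x (\<sigma> j) T else 0)"
    using j total_excess_eq_0[OF x] by (intro sum.cong) auto
  also have "\<dots> = total_excess x (\<sigma> j) T"
    using j by simp
  finally show ?thesis
    using j adv unfolding E_def by auto
qed

lemma blocking_budget_bounds:
  fixes \<alpha> \<delta> :: real
  assumes "0 < \<alpha>" "0 < \<delta>" "\<delta> \<le> 1" "2 * real M + 3 \<le> (1 - \<alpha>) * real T" "6 \<le> \<alpha> * \<delta> * real T"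
    and "\<alpha> * real T \<in> \<int>"
  obtains B where "real B = \<alpha> * real T" "1 \<le> B" "M + B + M \<le> T" "\<alpha> * real T + 3 \<le> real T"
proof -
  obtain z where "\<alpha> * real T = of_int z"
    using assms(6) by (auto elim: Ints_cases)
  moreover have "0 \<le> \<alpha> * real T"
    using assms(1) by simp
  ultimately have B: "real (nat z) = \<alpha> * real T"
    by simp
  have "\<delta> * real T \<le> real T"
    by (rule mult_left_le_one_le) (use assms(2,3) in auto)
  then have "\<alpha> * (\<delta> * real T) \<le> \<alpha> * real T"
    by (rule mult_left_mono) (use assms(1) in simp)
  moreover have "(1 - \<alpha>) * real T = real T - real (nat z)"
    using B by (simp add: algebra_simps)
  ultimately have "6 \<le> real (nat z)" "real (M + nat z + M) \<le> real T" "\<alpha> * real T + 3 \<le> real T"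
    using assms(4,5) B by (simp_all add: mult.assoc)
  then have "1 \<le> nat z" "M + nat z + M \<le> T" "\<alpha> * real T + 3 \<le> real T"
    by (simp_all only: of_nat_le_iff)
  with B show ?thesis
    using that by blast
qed

lemma no_nash_eq_large_horizon:
  assumes k: "1 \<le> k" "k < N" and ka: "1 \<le> ka" and \<alpha>: "0 < \<alpha>" "\<alpha> < 1" and x: "x = real k / real N"
    and \<delta>: "0 < \<delta>" "\<delta> \<le> \<alpha> * x / 8" "\<delta> \<le> real ((N - 2) choose (k - 1)) / real (N choose k)"
    and M: "(1 - x) ^ M \<le> \<delta> / 12"
    and T: "2 * real M + 3 \<le> (1 - \<alpha>) * real T" "6 \<le> \<alpha> * \<delta> * real T" "\<alpha> * real T \<in> \<int>"
  shows "\<not> nash_eq N k T \<alpha> ka p \<sigma>"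
proof
  assume ne: "nash_eq N k T \<alpha> ka p \<sigma>"
  have x01: "0 < x" "x < 1" and N: "0 < N"
    using k by (simp_all add: x)
  have "\<alpha> * x < x"
    using \<alpha> x01 by simp
  with \<delta>(2) M x01 have small: "(1 - x) ^ M < x / 6" and "\<delta> \<le> 1"
    by linarith+
  then have "1 \<le> M"
    using x01 by (cases M) auto
  obtain B where B: "real B = \<alpha> * real T" "1 \<le> B" "M + B + M \<le> T" "\<alpha> * real T + 3 \<le> real T"
    using blocking_budget_bounds[OF \<alpha>(1) \<delta>(1) \<open>\<delta> \<le> 1\<close> T] .
  have marg: "\<forall>i<N. incl_prob p i = x"
    using nash_eq_uniform_marginals[OF ne k(1) less_imp_le[OF k(2)] less_imp_le[OF \<alpha>(1)] B(4)] unfolding x .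
  obtain j where j: "j < N" "blocked_slots (\<sigma> j) T = B" "\<forall>i<N. i \<noteq> j \<longrightarrow> blocked_slots (\<sigma> i) T = 0"
      "excess_bound x B - 3 * real B * (1 - x) ^ M / x \<le> total_excess x (\<sigma> j) T"
    using nash_eq_blocking_concentrated[OF ne marg x01(1) less_imp_le[OF x01(2)] N ka B(1,2) \<open>1 \<le> M\<close> B(3) small]
    by blast
  obtain p' where "bs_strategy N k p'" "payoff N T p' \<sigma> < payoff N T p \<sigma>"
    using exists_better_strategy[OF k x marg j \<delta> less_imp_le[OF \<alpha>(2)] M B(1) T(2)] by blast
  moreover have "payoff N T p \<sigma> \<le> payoff N T p' \<sigma>"
    using ne \<open>bs_strategy N k p'\<close> by (simp add: nash_eq_def)
  ultimately show False
    by simp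
qed

lemma eventually_le_mult_real:
  assumes "0 < a"
  shows "\<forall>\<^sub>F n in sequentially. c \<le> a * real n"
proof -
  have "filterlim (\<lambda>n. a * real n) at_top sequentially"
    using filterlim_tendsto_pos_mult_at_top[OF tendsto_const assms filterlim_real_sequentially] .
  then show ?thesis
    by (simp add: filterlim_at_top)
qed

theorem theorem16:
  fixes N k ka :: nat and \<alpha> :: real
  assumes "N \<ge> 2" "1 \<le> k" "k < N" "ka \<ge> 1" "0 < \<alpha>" "\<alpha> < 1"
  shows "\<exists>T0. \<forall>T\<ge>T0. \<alpha> * real T \<in> \<int> \<longrightarrow>
           \<not> (\<exists>p \<sigma>. nash_eq N k T \<alpha> ka p \<sigma>)"
proof -
  define x where "x = real k / real N"
  define \<delta> where "\<delta> = min (\<alpha> * x / 8) (real ((N - 2) choose (k - 1)) / real (N choose k))"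
  have x: "0 < x" "x < 1"
    using assms by (simp_all add: x_def)
  then have "0 < \<delta>"
    using assms by (simp add: \<delta>_def)
  obtain M where M: "(1 - x) ^ M < \<delta> / 12"
    using real_arch_pow_inv[of "\<delta> / 12" "1 - x"] \<open>0 < \<delta>\<close> x by auto
  have "\<forall>\<^sub>F T in sequentially. 2 * real M + 3 \<le> (1 - \<alpha>) * real T \<and> 6 \<le> \<alpha> * \<delta> * real T"
    using assms \<open>0 < \<delta>\<close> by (intro eventually_conj eventually_le_mult_real) auto
  then obtain T0 where T0: "\<And>T. T \<ge> T0 \<Longrightarrow> 2 * real M + 3 \<le> (1 - \<alpha>) * real T \<and> 6 \<le> \<alpha> * \<delta> * real T"
    by (auto simp: eventually_sequentially)
  have "\<delta> \<le> \<alpha> * x / 8" "\<delta> \<le> real ((N - 2) choose (k - 1)) / real (N choose k)"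
    unfolding \<delta>_def by (rule min.cobounded1, rule min.cobounded2)
  then have "\<not> nash_eq N k T \<alpha> ka p \<sigma>" if "T \<ge> T0" "\<alpha> * real T \<in> \<int>" for T p \<sigma>
    using assms x_def \<open>0 < \<delta>\<close> less_imp_le[OF M] T0[OF that(1)] that(2) by (intro no_nash_eq_large_horizon) auto
  then show ?thesis
    by blast
qed

end
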